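(* Every closed-disk drawable subset of $\mathbb{R}^2$ is Lebesgue measurable. Not every Lebesgue measurable subset of $\mathbb{R}^2$ is closed-disk drawable, but the collection $\mathcal{D}_{\le}$ of closed-disk drawable sets has the same cardinality as the collection of Lebesgue measurable subsets of $\mathbb{R}^2$. In particular, $|\mathcal{D}_{\le}|>|\mathcal{D}|$.
   Context: For $A\subseteq\mathbb{R}^2$ let $N(A)=\{x\in\mathbb{R}^2: |x-a|<1 \text{ for some } a\in A\}$ and $N_{\le}(A)=\{x\in\mathbb{R}^2: |x-a|\le 1 \text{ for some } a\in A\}$. Let $\mathcal{D}_1=\{N(A_1): A_1\subseteq\mathbb{R}^2\}$ and for $n\ge 2$ let $\mathcal{D}_n=\{D\cup N(A_n): D\in\mathcal{D}_{n-1}, A_n\subseteq\mathbb{R}^2\}$ if $n$ is odd and $\mathcal{D}_n=\{D\setminus N(A_n): D\in\mathcal{D}_{n-1}, A_n\subseteq\mathbb{R}^2\}$ if $n$ is even. The collection of drawable sets is $\mathcal{D}=\bigcup_{n\ge1}\mathcal{D}_n$. The collection $\mathcal{D}_{\le}$ of closed-disk drawable sets is defined in the same way with every $N(\cdot)$ replaced by $N_{\le}(\cdot)$. A Lebesgue set is a set differing from a Borel set by a subset of a Lebesgue-null set. *)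

theory Defs
  imports "HOL-Analysis.Analysis" "HOL-Library.Equipollence"
begin

type_synonym plane = "real ^ 2"

definition nbhd_open :: "plane set \<Rightarrow> plane set" where
  "nbhd_open A = {x. \<exists>a\<in>A. dist x a < 1}"

definition nbhd_closed :: "plane set \<Rightarrow> plane set" where
  "nbhd_closed A = {x. \<exists>a\<in>A. dist x a \<le> 1}"

fun drawable_stage :: "(plane set \<Rightarrow> plane set) \<Rightarrow> nat \<Rightarrow> plane set set" where
  "drawable_stage Nb 0 = {}"
| "drawable_stage Nb (Suc 0) = {Nb A | A. True}"
| "drawable_stage Nb (Suc (Suc n)) =
     (if odd (Suc (Suc n))
      then {D \<union> Nb A | D A. D \<in> drawable_stage Nb (Suc n)}
      else {D - Nb A | D A. D \<in> drawable_stage Nb (Suc n)})"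

definition drawable_sets :: "(plane set \<Rightarrow> plane set) \<Rightarrow> plane set set" where
  "drawable_sets Nb = (\<Union>n\<in>{1..}. drawable_stage Nb n)"

abbreviation drawable :: "plane set set" where
  "drawable \<equiv> drawable_sets nbhd_open"

abbreviation closed_drawable :: "plane set set" where
  "closed_drawable \<equiv> drawable_sets nbhd_closed"

end

theory Submission
  imports Defs
begin

text \<open>
  A closed unit neighbourhood N_le(A) is a union of closed balls of a fixed radius, hence Lebesgue
  measurable by the Vitali covering theorem; it also lies between the open set N(A) and its closure,
  so it differs from an open set by a closed nowhere dense set. Both properties survive unions and
  differences, so every closed-disk drawable set has them. A countable dense set is null but does not
  differ from any open set by a nowhere dense set, hence is not closed-disk drawable.

  For the cardinalities: if A lies on a line and e is a unit normal to it, then x + e \<in> N_le(A) iff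
  x \<in> A for x on the line, so A \<mapsto> N_le(A) embeds 2^c into D_le, while there are at most 2^c
  Lebesgue sets. Drawable sets are built in finitely many steps from open sets, of which a second
  countable space has only c, so |D| \<le> c < 2^c.
\<close>

lemma nbhd_open_eq_Union_balls: "nbhd_open A = (\<Union>a\<in>A. ball a 1)"
  by (auto simp: nbhd_open_def dist_commute)

lemma nbhd_closed_eq_Union_cballs: "nbhd_closed A = (\<Union>a\<in>A. cball a 1)"
  by (auto simp: nbhd_closed_def dist_commute)

lemma nbhd_in_drawable_sets: "Nb A \<in> drawable_sets Nb"
  unfolding drawable_sets_def by (rule UN_I[of "Suc 0"]) auto

lemma drawable_sets_induct:
  assumes "D \<in> drawable_sets Nb"
    and "\<And>A. P (Nb A)"
    and "\<And>X Y. P X \<Longrightarrow> P Y \<Longrightarrow> P (X \<union> Y)"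
    and "\<And>X Y. P X \<Longrightarrow> P Y \<Longrightarrow> P (X - Y)"
  shows "P D"
proof -
  have "\<forall>D \<in> drawable_stage Nb (Suc n). P D" for n
    by (induction n) (auto simp: assms(2-4))
  then have "\<forall>D \<in> drawable_stage Nb n. P D" for n
    by (cases n) auto
  then show ?thesis
    using assms(1) by (auto simp: drawable_sets_def)
qed

section \<open>Measurability\<close>

lemma cball_subset_cball_through:
  fixes a x :: "'a::real_normed_vector"
  assumes "x \<in> cball a r" "0 < \<rho>" "\<rho> \<le> r"
  obtains c where "x \<in> cball c \<rho>" "cball c \<rho> \<subseteq> cball a r"
proof
  define c where "c = x + (\<rho> / r) *\<^sub>R (a - x)"
  have "dist x c = (\<rho> / r) * dist a x"
    using assms by (simp add: c_def dist_norm)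
  also have "\<dots> \<le> \<rho>"
    using assms by (simp add: divide_le_eq mult.commute mult_left_mono)
  finally show "x \<in> cball c \<rho>" by (simp add: dist_commute)
  have "dist a c = (1 - \<rho> / r) * dist a x"
  proof -
    have "a - c = (1 - \<rho> / r) *\<^sub>R (a - x)"
      by (simp add: c_def algebra_simps)
    then show ?thesis
      using assms by (simp add: dist_norm)
  qed
  also have "\<dots> \<le> (1 - \<rho> / r) * r"
    using assms by (intro mult_left_mono) auto
  also have "\<dots> = r - \<rho>"
    using assms by (simp add: algebra_simps)
  finally show "cball c \<rho> \<subseteq> cball a r"
    by (smt (verit) dist_triangle mem_cball subsetI)
qed

lemma lebesgue_measurable_if_fine_cball_cover:
  fixes S :: "'a::euclidean_space set"
  assumes fine: "\<And>x d. x \<in> S \<Longrightarrow> 0 < d \<Longrightarrow>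
                   \<exists>c \<rho>. 0 < \<rho> \<and> \<rho> < d \<and> x \<in> cball c \<rho> \<and> cball c \<rho> \<subseteq> S"
  shows "S \<in> sets lebesgue"
proof -
  define K where "K = {i. 0 < snd i \<and> cball (fst i) (snd i) \<subseteq> S}"
  have pos: "\<And>i. i \<in> K \<Longrightarrow> 0 < snd i"
    by (simp add: K_def)
  have cover: "\<exists>i. i \<in> K \<and> x \<in> cball (fst i) (snd i) \<and> snd i < d"
    if xd: "x \<in> S" "0 < d" for x d
  proof -
    obtain c \<rho> where "0 < \<rho>" "\<rho> < d" "x \<in> cball c \<rho>" "cball c \<rho> \<subseteq> S"
      using fine[OF xd] by blast
    then show ?thesis
      by (intro exI[of _ "(c, \<rho>)"]) (simp add: K_def)
  qed
  obtain C where C: "countable C" "C \<subseteq> K"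
    and null: "negligible (S - (\<Union>i\<in>C. cball (fst i) (snd i)))"
    by (rule Vitali_covering_theorem_cballs[of K snd S fst, OF pos cover]) (simp_all add: that)
  let ?U = "\<Union>i\<in>C. cball (fst i) (snd i)"
  have U: "?U \<in> sets lebesgue"
    using C(1) by (intro sets.countable_UN'' fmeasurableD lmeasurable_cball)
  have "?U - S = {}"
    using C(2) by (auto simp: K_def)
  with null have "negligible (sym_diff ?U S)"
    by simp
  with U show ?thesis
    by (rule sets_negligible_symdiff)
qed

lemma lebesgue_measurable_Union_cballs:
  fixes A :: "'a::euclidean_space set"
  assumes "0 < r"
  shows "(\<Union>a\<in>A. cball a r) \<in> sets lebesgue"
proof (rule lebesgue_measurable_if_fine_cball_cover)
  fix x and d :: real
  assume "x \<in> (\<Union>a\<in>A. cball a r)" "0 < d"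
  then obtain a where a: "a \<in> A" "x \<in> cball a r" by blast
  define \<rho> where "\<rho> = min (d/2) r"
  have \<rho>: "0 < \<rho>" "\<rho> \<le> r" "\<rho> < d"
    using \<open>0 < d\<close> assms by (auto simp: \<rho>_def)
  obtain c where "x \<in> cball c \<rho>" "cball c \<rho> \<subseteq> cball a r"
    using cball_subset_cball_through[OF a(2) \<rho>(1,2)] .
  with a(1) \<rho> show "\<exists>c \<rho>. 0 < \<rho> \<and> \<rho> < d \<and> x \<in> cball c \<rho> \<and> cball c \<rho> \<subseteq> (\<Union>a\<in>A. cball a r)"
    by blast
qed

lemma nbhd_closed_lebesgue_measurable: "nbhd_closed A \<in> sets lebesgue"
  unfolding nbhd_closed_eq_Union_cballs by (rule lebesgue_measurable_Union_cballs) simp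

lemma closed_drawable_lebesgue_measurable: "closed_drawable \<subseteq> sets lebesgue"
proof
  fix D assume "D \<in> closed_drawable"
  then show "D \<in> sets lebesgue"
    by (rule drawable_sets_induct) (simp_all add: nbhd_closed_lebesgue_measurable sets.Un sets.Diff)
qed

section \<open>Sets differing from an open set by a nowhere dense set\<close>

lemma interior_frontier_open:
  assumes "open S"
  shows "interior (frontier S) = {}"
proof -
  have "interior (frontier S) \<inter> S = {}"
    using assms interior_subset[of "frontier S"] by (auto simp: frontier_def interior_open)
  then have "interior (frontier S) \<inter> closure S = {}"
    by (simp add: open_Int_closure_eq_empty)
  then show ?thesis
    using interior_subset[of "frontier S"] by (auto simp: frontier_def)
qed

definition open_modulo_nowhere_dense :: "'a::topological_space set \<Rightarrow> bool" where
  "open_modulo_nowhere_dense T \<longleftrightarrow>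
     (\<exists>G F. open G \<and> closed F \<and> interior F = {} \<and> sym_diff T G \<subseteq> F)"

lemma open_modulo_nowhere_dense_Un:
  assumes "open_modulo_nowhere_dense X" "open_modulo_nowhere_dense Y"
  shows "open_modulo_nowhere_dense (X \<union> Y)"
proof -
  obtain G1 F1 where 1: "open G1" "closed F1" "interior F1 = {}" "sym_diff X G1 \<subseteq> F1"
    using assms(1) unfolding open_modulo_nowhere_dense_def by blast
  obtain G2 F2 where 2: "open G2" "closed F2" "interior F2 = {}" "sym_diff Y G2 \<subseteq> F2"
    using assms(2) unfolding open_modulo_nowhere_dense_def by blast
  show ?thesis
    unfolding open_modulo_nowhere_dense_def
  proof (intro exI conjI)
    show "open (G1 \<union> G2)" "closed (F1 \<union> F2)"
      using 1 2 by auto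
    show "interior (F1 \<union> F2) = {}"
      using 1 2 by (simp add: interior_closed_Un_empty_interior)
    show "sym_diff (X \<union> Y) (G1 \<union> G2) \<subseteq> F1 \<union> F2"
      using 1(4) 2(4) by blast
  qed
qed

lemma open_modulo_nowhere_dense_Compl:
  assumes "open_modulo_nowhere_dense X"
  shows "open_modulo_nowhere_dense (- X)"
proof -
  obtain G F where GF: "open G" "closed F" "interior F = {}" "sym_diff X G \<subseteq> F"
    using assms unfolding open_modulo_nowhere_dense_def by blast
  show ?thesis
    unfolding open_modulo_nowhere_dense_def
  proof (intro exI conjI)
    show "open (- closure G)" "closed (F \<union> frontier G)"
      using GF by auto
    show "interior (F \<union> frontier G) = {}"
      using GF by (simp add: interior_closed_Un_empty_interior interior_frontier_open)
    show "sym_diff (- X) (- closure G) \<subseteq> F \<union> frontier G"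
      using GF closure_subset[of G] by (auto simp: frontier_def interior_open)
  qed
qed

lemma open_modulo_nowhere_dense_Diff:
  assumes "open_modulo_nowhere_dense X" "open_modulo_nowhere_dense Y"
  shows "open_modulo_nowhere_dense (X - Y)"
proof -
  have "X - Y = - (- X \<union> Y)"
    by blast
  moreover have "open_modulo_nowhere_dense (- (- X \<union> Y))"
    by (intro open_modulo_nowhere_dense_Compl open_modulo_nowhere_dense_Un assms)
  ultimately show ?thesis
    by (simp only:)
qed

lemma open_modulo_nowhere_dense_between_closure:
  assumes "open G" "G \<subseteq> T" "T \<subseteq> closure G"
  shows "open_modulo_nowhere_dense T"
  unfolding open_modulo_nowhere_dense_def
proof (intro exI conjI)
  show "sym_diff T G \<subseteq> frontier G"
    using assms by (auto simp: frontier_def interior_open)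
qed (use assms in \<open>auto simp: interior_frontier_open\<close>)

lemma not_open_modulo_nowhere_dense:
  assumes dense: "\<And>U. open U \<Longrightarrow> U \<noteq> {} \<Longrightarrow> U \<inter> S \<noteq> {}"
    and codense: "\<And>U. open U \<Longrightarrow> U \<noteq> {} \<Longrightarrow> U - S \<noteq> {}"
  shows "\<not> open_modulo_nowhere_dense S"
proof
  assume "open_modulo_nowhere_dense S"
  then obtain G F where GF: "open G" "closed F" "interior F = {}" "sym_diff S G \<subseteq> F"
    unfolding open_modulo_nowhere_dense_def by blast
  show False
  proof (cases "G \<subseteq> F")
    case True
    then have "- F \<inter> S = {}"
      using GF(4) by blast
    then have "F = UNIV"
      using dense[of "- F"] GF(2) by (auto simp: open_Compl)
    then show False
      using GF(3) by simp
  next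
    case False
    then have "(G - F) - S = {}"
      using GF(4) by blast
    then show False
      using codense[of "G - F"] False GF(1,2) by (auto simp: open_Diff)
  qed
qed

lemma open_Diff_countable_nonempty:
  fixes D :: "'a::euclidean_space set"
  assumes "countable D" "open U" "U \<noteq> {}"
  shows "U - D \<noteq> {}"
proof -
  obtain x r where "0 < r" "ball x r \<subseteq> U"
    using assms(2,3) open_contains_ball by blast
  then show ?thesis
    using ball_minus_countable_nonempty[OF assms(1), of r x] by blast
qed

lemma countable_lebesgue_measurable:
  fixes D :: "'a::euclidean_space set"
  assumes "countable D"
  shows "D \<in> sets lebesgue"
  using null_sets_completionI[OF countable_imp_null_set_lborel[OF assms]] by blast

lemma nbhd_closed_open_modulo_nowhere_dense: "open_modulo_nowhere_dense (nbhd_closed A)"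
proof (rule open_modulo_nowhere_dense_between_closure)
  show "open (nbhd_open A)"
    by (simp add: nbhd_open_eq_Union_balls open_UN)
  show "nbhd_open A \<subseteq> nbhd_closed A"
    by (auto simp: nbhd_open_eq_Union_balls nbhd_closed_eq_Union_cballs)
  have "cball a 1 \<subseteq> closure (nbhd_open A)" if "a \<in> A" for a
    using that closure_mono[of "ball a 1" "nbhd_open A"] by (auto simp: nbhd_open_eq_Union_balls)
  then show "nbhd_closed A \<subseteq> closure (nbhd_open A)"
    by (auto simp: nbhd_closed_eq_Union_cballs)
qed

lemma closed_drawable_open_modulo_nowhere_dense:
  "D \<in> closed_drawable \<Longrightarrow> open_modulo_nowhere_dense D"
  by (erule drawable_sets_induct)
    (simp_all add: nbhd_closed_open_modulo_nowhere_dense open_modulo_nowhere_dense_Un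
      open_modulo_nowhere_dense_Diff)

lemma closed_drawable_not_all_lebesgue_measurable:
  "\<not> sets (lebesgue :: plane measure) \<subseteq> closed_drawable"
proof -
  obtain D :: "plane set" where "countable D"
    and dense: "\<And>U. open U \<Longrightarrow> U \<noteq> {} \<Longrightarrow> \<exists>d\<in>D. d \<in> U"
    using countable_dense_setE by blast
  have "\<not> open_modulo_nowhere_dense D"
    using dense open_Diff_countable_nonempty[OF \<open>countable D\<close>]
    by (intro not_open_modulo_nowhere_dense) blast+
  then have "D \<notin> closed_drawable"
    using closed_drawable_open_modulo_nowhere_dense by blast
  with countable_lebesgue_measurable[OF \<open>countable D\<close>] show ?thesis
    by blast
qed

section \<open>Cardinalities\<close>

lemma Pow_lepoll_mono:
  assumes "A \<lesssim> B"
  shows "Pow A \<lesssim> Pow B"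
proof -
  obtain f where "inj_on f A" "f ` A \<subseteq> B"
    using assms unfolding lepoll_def by blast
  then show ?thesis
    unfolding lepoll_def by (intro exI[of _ "image f"]) (auto simp: inj_on_image_Pow)
qed

lemma UN_lepoll_infinite:
  assumes "infinite C" "I \<lesssim> C" "\<And>i. i \<in> I \<Longrightarrow> A i \<lesssim> C"
  shows "(\<Union>i\<in>I. A i) \<lesssim> C"
  using assms card_of_UNION_ordLeq_infinite[of C I A]
  unfolding lepoll_def card_of_ordLeq[symmetric] by blast

lemma drawable_stage_lepoll:
  assumes "infinite C" "range Nb \<lesssim> C"
  shows "drawable_stage Nb n \<lesssim> C"
proof -
  have "drawable_stage Nb (Suc n) \<lesssim> C" for n
  proof (induction n)
    case 0
    have "drawable_stage Nb (Suc 0) = range Nb"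
      by auto
    with assms(2) show ?case
      by simp
  next
    case (Suc n)
    have "drawable_stage Nb (Suc (Suc n)) \<lesssim>
          (\<Union>X\<in>range Nb. (\<lambda>D. if odd n then D \<union> X else D - X) ` drawable_stage Nb (Suc n))"
      by (rule subset_imp_lepoll) auto
    also have "\<dots> \<lesssim> C"
      using assms Suc.IH by (intro UN_lepoll_infinite) (auto intro: lepoll_trans image_lepoll)
    finally show ?case .
  qed
  then show ?thesis
    by (cases n) auto
qed

lemma drawable_sets_lepoll:
  assumes "infinite C" "range Nb \<lesssim> C"
  shows "drawable_sets Nb \<lesssim> C"
proof -
  have "{1::nat..} \<lesssim> C"
    using subset_imp_lepoll[OF subset_UNIV] infinite_le_lepoll[THEN iffD1, OF assms(1)]
    by (rule lepoll_trans)
  then show ?thesis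
    unfolding drawable_sets_def using assms
    by (intro UN_lepoll_infinite drawable_stage_lepoll)
qed

lemma open_sets_lepoll_nat_sets:
  "{U :: 'a::second_countable_topology set. open U} \<lesssim> (UNIV :: nat set set)"
proof -
  obtain \<B> :: "'a set set" where "countable \<B>" and basis: "topological_basis \<B>"
    using ex_countable_basis by blast
  have Union_basis: "U = \<Union>{b \<in> \<B>. b \<subseteq> U}" if "open U" for U
  proof -
    obtain \<B>' where "\<B>' \<subseteq> \<B>" "\<Union>\<B>' = U"
      using basis \<open>open U\<close> unfolding topological_basis_def by blast
    then show ?thesis
      by blast
  qed
  have "inj_on (\<lambda>U. {b \<in> \<B>. b \<subseteq> U}) {U. open U}"
    by (rule inj_onI) (metis Union_basis mem_Collect_eq)
  then have "{U :: 'a set. open U} \<lesssim> Pow \<B>"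
    unfolding lepoll_def by (intro exI[of _ "\<lambda>U. {b \<in> \<B>. b \<subseteq> U}"]) auto
  also have "Pow \<B> \<lesssim> Pow (UNIV :: nat set)"
  proof (rule Pow_lepoll_mono)
    show "\<B> \<lesssim> (UNIV :: nat set)"
      using \<open>countable \<B>\<close> unfolding countable_def lepoll_def by auto
  qed
  finally show ?thesis
    by simp
qed

lemma UNIV_lepoll_open_sets: "(UNIV :: 'a::t1_space set) \<lesssim> {U :: 'a set. open U}"
proof -
  have "inj (\<lambda>x::'a. - {x})"
    by (auto simp: inj_on_def)
  then have "(UNIV :: 'a set) \<approx> range (\<lambda>x::'a. - {x})"
    by (rule eqpoll_sym[OF inj_on_image_eqpoll_self])
  also have "\<dots> \<lesssim> {U :: 'a set. open U}"
    by (rule subset_imp_lepoll) (auto intro: open_Compl)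
  finally show ?thesis .
qed

lemma drawable_lepoll_nat_sets: "drawable \<lesssim> (UNIV :: nat set set)"
proof (rule drawable_sets_lepoll)
  show "infinite (UNIV :: nat set set)"
    by (metis Pow_UNIV finite_Pow_iff infinite_UNIV_nat)
  have "range nbhd_open \<lesssim> {U :: plane set. open U}"
    by (rule subset_imp_lepoll) (auto simp: nbhd_open_eq_Union_balls open_UN)
  also have "\<dots> \<lesssim> (UNIV :: nat set set)"
    by (rule open_sets_lepoll_nat_sets)
  finally show "range nbhd_open \<lesssim> (UNIV :: nat set set)" .
qed

lemma dist_add_unit_normal_le_1_iff:
  fixes a b x :: "'a::real_inner"
  assumes "norm b = 1" "x \<bullet> b = 0" "a \<bullet> b = 0"
  shows "dist (x + b) a \<le> 1 \<longleftrightarrow> a = x"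
proof -
  have "orthogonal (x - a) b"
    using assms by (simp add: orthogonal_def inner_diff_left)
  then have "(dist (x + b) a)\<^sup>2 = (norm (x - a))\<^sup>2 + 1"
    using norm_add_Pythagorean[of "x - a" b] assms(1) by (simp add: dist_norm algebra_simps)
  moreover have "dist (x + b) a \<le> 1 \<longleftrightarrow> (dist (x + b) a)\<^sup>2 \<le> 1"
    by (simp add: power_le_one_iff)
  ultimately show ?thesis
    by (simp add: eq_commute[of a x])
qed

lemma inj_on_nbhd_closed_hyperplane:
  assumes "norm b = 1"
  shows "inj_on nbhd_closed (Pow {x. x \<bullet> b = 0})"
proof (rule inj_onI)
  have mem: "x + b \<in> nbhd_closed S \<longleftrightarrow> x \<in> S" if "S \<subseteq> {x. x \<bullet> b = 0}" "x \<bullet> b = 0" for S x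
    using that dist_add_unit_normal_le_1_iff[OF assms] by (auto simp: nbhd_closed_def)
  fix S T
  assume "S \<in> Pow {x. x \<bullet> b = 0}" "T \<in> Pow {x. x \<bullet> b = 0}" "nbhd_closed S = nbhd_closed T"
  then show "S = T"
    using mem by blast
qed

lemma Pow_reals_lepoll_closed_drawable: "Pow (UNIV :: real set) \<lesssim> closed_drawable"
proof -
  let ?L = "{x :: plane. x \<bullet> axis 2 1 = 0}"
  have "(UNIV :: real set) \<lesssim> ?L"
    unfolding lepoll_def
    by (intro exI[of _ "\<lambda>t. t *\<^sub>R axis 1 1"]) (auto simp: inj_on_def inner_axis_axis)
  then have "Pow (UNIV :: real set) \<lesssim> Pow ?L"
    by (rule Pow_lepoll_mono)
  also have "Pow ?L \<lesssim> closed_drawable"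
    unfolding lepoll_def
  proof (intro exI conjI)
    show "inj_on nbhd_closed (Pow ?L)"
      by (rule inj_on_nbhd_closed_hyperplane) simp
    show "nbhd_closed ` Pow ?L \<subseteq> closed_drawable"
      using nbhd_in_drawable_sets by blast
  qed
  finally show ?thesis .
qed

lemma lebesgue_sets_lepoll_Pow_reals:
  "sets (lebesgue :: 'a::euclidean_space measure) \<lesssim> Pow (UNIV :: real set)"
proof -
  have "sets (lebesgue :: 'a measure) \<lesssim> Pow (UNIV :: 'a set)"
    by (rule subset_imp_lepoll) auto
  also have "\<dots> \<lesssim> Pow {U :: 'a set. open U}"
    by (intro Pow_lepoll_mono UNIV_lepoll_open_sets)
  also have "\<dots> \<lesssim> Pow (UNIV :: nat set set)"
    by (intro Pow_lepoll_mono open_sets_lepoll_nat_sets)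
  also have "\<dots> \<lesssim> Pow (UNIV :: real set)"
    by (intro Pow_lepoll_mono eqpoll_imp_lepoll nat_sets_eqpoll_reals)
  finally show ?thesis .
qed

theorem theorem1p3:
  shows "closed_drawable \<subseteq> sets (lebesgue :: plane measure)
       \<and> \<not> sets (lebesgue :: plane measure) \<subseteq> closed_drawable
       \<and> closed_drawable \<approx> sets (lebesgue :: plane measure)
       \<and> drawable \<prec> closed_drawable"
proof (intro conjI)
  show measurable: "closed_drawable \<subseteq> sets (lebesgue :: plane measure)"
    by (rule closed_drawable_lebesgue_measurable)
  show "\<not> sets (lebesgue :: plane measure) \<subseteq> closed_drawable"
    by (rule closed_drawable_not_all_lebesgue_measurable)
  have "sets (lebesgue :: plane measure) \<lesssim> closed_drawable"
    using lebesgue_sets_lepoll_Pow_reals Pow_reals_lepoll_closed_drawable by (rule lepoll_trans)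
  with subset_imp_lepoll[OF measurable]
  show "closed_drawable \<approx> sets (lebesgue :: plane measure)"
    by (rule lepoll_antisym)
  have "drawable \<lesssim> (UNIV :: nat set set)"
    by (rule drawable_lepoll_nat_sets)
  also have "\<dots> \<approx> (UNIV :: real set)"
    by (rule nat_sets_eqpoll_reals)
  also have "\<dots> \<prec> Pow (UNIV :: real set)"
    by (rule lesspoll_Pow_self)
  also have "\<dots> \<lesssim> closed_drawable"
    by (rule Pow_reals_lepoll_closed_drawable)
  finally show "drawable \<prec> closed_drawable" .
qed

end
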